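(* Let $E$ be a real Banach space, $K\subset E$ nonempty closed convex, $Y$ a real Banach space containing a closed, convex, pointed cone $C$ with nonempty interior, $g\in\mathcal F$ satisfying H1–H4, $T:K\to\mathcal P(K)$ satisfying B4, and $f:E\times E\to Y$ satisfying B1–B3. Let $v\in K$, $x\in T(v)$, $\beta>0$ and $e\in\mathrm{int}(C)$. If $$z\in\mathrm{argmin}^C_w\{\beta f(x,y)+g(y)e-\langle y,g'(x)\rangle e: y\in T(v)\},$$ then there exists $c\in C^+\setminus\{0\}$ such that $$\langle y-z,g'(x)-g'(z)\rangle\langle e,c\rangle\le\beta\big[\langle f(x,y),c\rangle-\langle f(x,z),c\rangle\big]\quad\text{for all }y\in T(v).$$
   Context: $C^+=\{z\in Y^*:\langle y,z\rangle\ge0\ \forall y\in C\}$; $y\preceq y'$ iff $y'-y\in C$; $G$ is $C$-convex if $G(tx+(1-t)y)\preceq tG(x)+(1-t)G(y)$ for all $x,y$, $t\in[0,1]$. $\mathcal F$: functions $g:E\to\mathbb R$ strictly convex, lower semicontinuous, Gâteaux differentiable with derivative $g'$. $D_g(x,y)=g(x)-g(y)-\langle x-y,g'(y)\rangle$; $v_g(x,t)=\inf\{D_g(y,x):\|y-x\|=t\}$. H1: level sets of $D_g(x,\cdot)$ bounded; H2: $\inf_{x\in A}v_g(x,t)>0$ for all $t>0$, bounded $A$; H3: $g'$ uniformly continuous on bounded sets; H4: $\lim_{\|x\|\to\infty}(g(x)-\rho\|x-z\|)=\infty$ for all $z$, $\rho>0$. $\Pi^g_D(x)$: unique minimizer of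 $D_g(\cdot,x)$ over nonempty closed convex $D$. B1: $f(x,x)=0$. B2: $f$ uniformly continuous on bounded subsets of $E\times E$. B3: $f(x,\cdot)$ $C$-convex for all $x$. B4: $T$ has nonempty closed convex values, is demiclosed ($x^k\rightharpoonup\bar x$, $d(x^k,T(x^k))\to0\Rightarrow\bar x\in T(\bar x)$), lower semicontinuous at each $\bar x\in K$ ($x^k\to\bar x$, $\bar y\in T(\bar x)\Rightarrow\exists y^k\in T(x^k)$, $y^k\to\bar y$), and quasi $D_g$-nonexpansive ($S(x)=\Pi^g_{T(x)}(x)$ has a fixed point and $D_g(p,S(x))\le D_g(p,x)$ for all fixed points $p$ of $S$ and $x\in K$). $\mathrm{argmin}^C_w\{G(y):y\in Q\}$: set of $a\in Q$ for which no $y\in Q$ satisfies $G(a)-G(y)\in\mathrm{int}(C)$. *)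

theory Defs
  imports "HOL-Analysis.Analysis"
begin

definition strictly_convex :: "('a::real_vector \<Rightarrow> real) \<Rightarrow> bool" where
  "strictly_convex g \<longleftrightarrow>
     (\<forall>x y t. x \<noteq> y \<and> 0 < t \<and> t < 1 \<longrightarrow>
        g (t *\<^sub>R x + (1 - t) *\<^sub>R y) < t * g x + (1 - t) * g y)"

definition lsc :: "('a::topological_space \<Rightarrow> real) \<Rightarrow> bool" where
  "lsc g \<longleftrightarrow> (\<forall>x. \<forall>\<epsilon>>0. \<forall>\<^sub>F y in at x. g x - \<epsilon> < g y)"

text \<open>Gateaux differentiability of g with Gateaux derivative gd x, a continuous linear
  functional (element of the dual space); the pairing is blinfun_apply.\<close>
definition gateaux_deriv :: "('a::real_normed_vector \<Rightarrow> real) \<Rightarrow> ('a \<Rightarrow> ('a \<Rightarrow>\<^sub>L real)) \<Rightarrow> bool" where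
  "gateaux_deriv g gd \<longleftrightarrow>
     (\<forall>x h. ((\<lambda>t. g (x + t *\<^sub>R h)) has_real_derivative (blinfun_apply (gd x) h)) (at 0))"

definition class_F :: "('a::real_normed_vector \<Rightarrow> real) \<Rightarrow> ('a \<Rightarrow> ('a \<Rightarrow>\<^sub>L real)) \<Rightarrow> bool" where
  "class_F g gd \<longleftrightarrow> strictly_convex g \<and> lsc g \<and> gateaux_deriv g gd"

definition bregman :: "('a::real_normed_vector \<Rightarrow> real) \<Rightarrow> ('a \<Rightarrow> ('a \<Rightarrow>\<^sub>L real)) \<Rightarrow> 'a \<Rightarrow> 'a \<Rightarrow> real" where
  "bregman g gd x y = g x - g y - blinfun_apply (gd y) (x - y)"

definition mod_tc :: "('a::real_normed_vector \<Rightarrow> real) \<Rightarrow> ('a \<Rightarrow> ('a \<Rightarrow>\<^sub>L real)) \<Rightarrow> 'a \<Rightarrow> real \<Rightarrow> real" where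
  "mod_tc g gd x t = Inf {bregman g gd y x | y. norm (y - x) = t}"

definition H1 :: "('a::real_normed_vector \<Rightarrow> real) \<Rightarrow> ('a \<Rightarrow> ('a \<Rightarrow>\<^sub>L real)) \<Rightarrow> bool" where
  "H1 g gd \<longleftrightarrow> (\<forall>x r. bounded {y. bregman g gd x y \<le> r})"

definition H2 :: "('a::real_normed_vector \<Rightarrow> real) \<Rightarrow> ('a \<Rightarrow> ('a \<Rightarrow>\<^sub>L real)) \<Rightarrow> bool" where
  "H2 g gd \<longleftrightarrow> (\<forall>A t. bounded A \<and> t > 0 \<longrightarrow> (\<exists>\<delta>>0. \<forall>x\<in>A. \<delta> \<le> mod_tc g gd x t))"

definition H3 :: "('a::real_normed_vector \<Rightarrow> ('a \<Rightarrow>\<^sub>L real)) \<Rightarrow> bool" where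
  "H3 gd \<longleftrightarrow> (\<forall>A. bounded A \<longrightarrow> uniformly_continuous_on A gd)"

definition H4 :: "('a::real_normed_vector \<Rightarrow> real) \<Rightarrow> bool" where
  "H4 g \<longleftrightarrow> (\<forall>z. \<forall>\<rho>>0. filterlim (\<lambda>x. g x - \<rho> * norm (x - z)) at_top at_infinity)"

definition bproj :: "('a::real_normed_vector \<Rightarrow> real) \<Rightarrow> ('a \<Rightarrow> ('a \<Rightarrow>\<^sub>L real)) \<Rightarrow> 'a set \<Rightarrow> 'a \<Rightarrow> 'a" where
  "bproj g gd D x = (THE y. y \<in> D \<and> (\<forall>w\<in>D. bregman g gd y x \<le> bregman g gd w x))"

definition dual_cone :: "('b::real_normed_vector) set \<Rightarrow> ('b \<Rightarrow>\<^sub>L real) set" where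
  "dual_cone C = {z. \<forall>y\<in>C. 0 \<le> blinfun_apply z y}"

definition C_convex :: "'b::real_vector set \<Rightarrow> ('a::real_vector \<Rightarrow> 'b) \<Rightarrow> bool" where
  "C_convex C G \<longleftrightarrow> (\<forall>x y t. 0 \<le> t \<and> t \<le> 1 \<longrightarrow>
      t *\<^sub>R G x + (1 - t) *\<^sub>R G y - G (t *\<^sub>R x + (1 - t) *\<^sub>R y) \<in> C)"

definition weak_argmin :: "'b::real_normed_vector set \<Rightarrow> ('a \<Rightarrow> 'b) \<Rightarrow> 'a set \<Rightarrow> 'a set" where
  "weak_argmin C G Q = {a \<in> Q. \<not> (\<exists>y\<in>Q. G a - G y \<in> interior C)}"

definition weak_conv :: "(nat \<Rightarrow> 'a::real_normed_vector) \<Rightarrow> 'a \<Rightarrow> bool" where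
  "weak_conv xs x \<longleftrightarrow> (\<forall>\<phi>::'a \<Rightarrow>\<^sub>L real. (\<lambda>k. blinfun_apply \<phi> (xs k)) \<longlonglongrightarrow> blinfun_apply \<phi> x)"

definition B1 :: "('a \<Rightarrow> 'a \<Rightarrow> 'b::zero) \<Rightarrow> bool" where
  "B1 f \<longleftrightarrow> (\<forall>x. f x x = 0)"

definition B2 :: "('a::real_normed_vector \<Rightarrow> 'a \<Rightarrow> 'b::real_normed_vector) \<Rightarrow> bool" where
  "B2 f \<longleftrightarrow> (\<forall>B::('a \<times> 'a) set. bounded B \<longrightarrow> uniformly_continuous_on B (\<lambda>(x, y). f x y))"

definition B3 :: "'b::real_vector set \<Rightarrow> ('a::real_vector \<Rightarrow> 'a \<Rightarrow> 'b) \<Rightarrow> bool" where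
  "B3 C f \<longleftrightarrow> (\<forall>x. C_convex C (f x))"

definition B4 :: "('a::real_normed_vector \<Rightarrow> real) \<Rightarrow> ('a \<Rightarrow> ('a \<Rightarrow>\<^sub>L real)) \<Rightarrow> 'a set
                  \<Rightarrow> ('a \<Rightarrow> 'a set) \<Rightarrow> bool" where
  "B4 g gd K T \<longleftrightarrow>
     (\<forall>x\<in>K. T x \<subseteq> K \<and> T x \<noteq> {} \<and> closed (T x) \<and> convex (T x)) \<and>
     (\<forall>xs xb. (\<forall>k. xs k \<in> K) \<and> weak_conv xs xb \<and>
              (\<lambda>k. infdist (xs k) (T (xs k))) \<longlonglongrightarrow> 0 \<longrightarrow> xb \<in> T xb) \<and>
     (\<forall>xs xb yb. xb \<in> K \<and> (\<forall>k. xs k \<in> K) \<and> xs \<longlonglongrightarrow> xb \<and> yb \<in> T xb \<longrightarrow>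
              (\<exists>ys. (\<forall>k. ys k \<in> T (xs k)) \<and> ys \<longlonglongrightarrow> yb)) \<and>
     (\<exists>p\<in>K. bproj g gd (T p) p = p) \<and>
     (\<forall>p\<in>K. bproj g gd (T p) p = p \<longrightarrow>
        (\<forall>x\<in>K. bregman g gd p (bproj g gd (T x) x) \<le> bregman g gd p x))"

end

theory Submission
  imports Defs
begin

(* Write F y = beta f(x,y) + (g y - <y, g'(x)>) e.  The points F y - F z + d, with y in T v and
   d in int C, form an open convex set which misses 0 precisely because z is a weak minimiser.
   A continuous functional c that is positive on this set (Hahn-Banach, via the Minkowski
   functional) is nonnegative on C and positive at e, and z minimises c o F on T v.  As c o F is a
   convex function plus c e times the Gateaux differentiable g - g'(x), its one-sided derivative at
   z towards any y in T v is nonnegative, which is the claimed inequality. *)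

section \<open>Hahn--Banach extension of dominated functionals\<close>

definition sublinear :: "('a::real_vector \<Rightarrow> real) \<Rightarrow> bool" where
  "sublinear p \<longleftrightarrow>
     (\<forall>x y. p (x + y) \<le> p x + p y) \<and> (\<forall>c x. 0 < c \<longrightarrow> p (c *\<^sub>R x) = c * p x)"

text \<open>Partial linear functionals are represented by their graphs, so that Zorn's lemma can be
  applied to a family of sets ordered by inclusion.\<close>
definition dominated_functional_graph :: "('a::real_vector \<Rightarrow> real) \<Rightarrow> ('a \<times> real) set \<Rightarrow> bool" where
  "dominated_functional_graph p G \<longleftrightarrow> subspace G \<and>
     (\<forall>x a b. (x, a) \<in> G \<longrightarrow> (x, b) \<in> G \<longrightarrow> a = b) \<and> (\<forall>(x, a) \<in> G. a \<le> p x)"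

lemma dominated_functional_graphD:
  assumes "dominated_functional_graph p G"
  shows "(0, 0) \<in> G"
    and "(x, a) \<in> G \<Longrightarrow> (y, b) \<in> G \<Longrightarrow> (x + y, a + b) \<in> G"
    and "(x, a) \<in> G \<Longrightarrow> (c *\<^sub>R x, c * a) \<in> G"
    and "(x, a) \<in> G \<Longrightarrow> (x, b) \<in> G \<Longrightarrow> a = b"
    and "(x, a) \<in> G \<Longrightarrow> a \<le> p x"
  using assms subspace_0[of G] subspace_add[of G "(x, a)" "(y, b)"] subspace_scale[of G "(x, a)" c]
  by (auto simp: dominated_functional_graph_def zero_prod_def)

lemma dominated_functional_graphI:
  assumes "(0, 0) \<in> G"
    and "\<And>x a y b. (x, a) \<in> G \<Longrightarrow> (y, b) \<in> G \<Longrightarrow> (x + y, a + b) \<in> G"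
    and "\<And>x a c. (x, a) \<in> G \<Longrightarrow> (c *\<^sub>R x, c * a) \<in> G"
    and "\<And>x a b. (x, a) \<in> G \<Longrightarrow> (x, b) \<in> G \<Longrightarrow> a = b"
    and "\<And>x a. (x, a) \<in> G \<Longrightarrow> a \<le> p x"
  shows "dominated_functional_graph p G"
  using assms by (auto simp: dominated_functional_graph_def subspace_def zero_prod_def)

lemma subspace_add_scaleR_coeff_unique:
  assumes S: "subspace S" "x \<in> S" "x' \<in> S" and y: "y \<notin> S"
    and eq: "x + s *\<^sub>R y = x' + s' *\<^sub>R y"
  shows "s = s'"
proof (rule ccontr)
  assume "s \<noteq> s'"
  have "x' - x = (s - s') *\<^sub>R y" using eq by (simp add: algebra_simps)
  then have "y = inverse (s - s') *\<^sub>R (x' - x)" using \<open>s \<noteq> s'\<close> by simp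
  then have "y \<in> S" using S by (simp add: subspace_scale subspace_diff)
  then show False using y by simp
qed

lemma dominated_functional_graph_extension_value:
  assumes p: "sublinear p" and G: "dominated_functional_graph p G"
  obtains t where "\<And>x a s. (x, a) \<in> G \<Longrightarrow> a + s * t \<le> p (x + s *\<^sub>R y)"
proof -
  note G = dominated_functional_graphD[OF G]
  have subadd: "p (u + w) \<le> p u + p w" and hom: "0 < c \<Longrightarrow> p (c *\<^sub>R u) = c * p u" for u w c
    using p by (auto simp: sublinear_def)
  \<comment> \<open>Every admissible value at y lies between all a - p (x - y) and all p (x' + y) - a'.\<close>
  have sep: "a - p (x - y) \<le> p (x' + y) - a'" if "(x, a) \<in> G" "(x', a') \<in> G" for x a x' a'
  proof -
    have "a + a' \<le> p ((x - y) + (x' + y))" using G(5)[OF G(2)[OF that]] by simp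
    then show ?thesis using subadd[of "x - y" "x' + y"] by simp
  qed
  define t where "t = Sup {a - p (x - y) | x a. (x, a) \<in> G}"
  have t_ge: "a - p (x - y) \<le> t" if "(x, a) \<in> G" for x a
    unfolding t_def
    by (rule cSup_upper) (use that sep[OF _ G(1)] in \<open>auto intro!: bdd_aboveI\<close>)
  have t_le: "t \<le> p (x + y) - a" if "(x, a) \<in> G" for x a
    unfolding t_def by (rule cSup_least) (use that G(1) sep in auto)
  have "a + s * t \<le> p (x + s *\<^sub>R y)" if xa: "(x, a) \<in> G" for x a s
  proof (cases s "0::real" rule: linorder_cases)
    case less
    have "x + s *\<^sub>R y = (- s) *\<^sub>R (inverse (- s) *\<^sub>R x - y)"
      using less by (simp add: algebra_simps)
    then have "p (x + s *\<^sub>R y) = - s * p (inverse (- s) *\<^sub>R x - y)"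
      using less by (simp only:) (rule hom, simp)
    moreover have "inverse (- s) * a - p (inverse (- s) *\<^sub>R x - y) \<le> t"
      using t_ge[OF G(3)[OF xa]] .
    then have "a - (- s) * p (inverse (- s) *\<^sub>R x - y) \<le> - s * t"
      using less by (simp add: field_simps)
    ultimately show ?thesis by simp
  next
    case equal
    then show ?thesis using G(5)[OF xa] by simp
  next
    case greater
    have "x + s *\<^sub>R y = s *\<^sub>R (inverse s *\<^sub>R x + y)"
      using greater by (simp add: algebra_simps)
    then have "p (x + s *\<^sub>R y) = s * p (inverse s *\<^sub>R x + y)"
      using greater by (simp only:) (rule hom)
    moreover have "t \<le> p (inverse s *\<^sub>R x + y) - inverse s * a"
      using t_le[OF G(3)[OF xa]] .
    then have "s * t \<le> s * p (inverse s *\<^sub>R x + y) - a"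
      using greater by (simp add: field_simps)
    ultimately show ?thesis by simp
  qed
  then show ?thesis by (rule that)
qed

lemma dominated_functional_graph_extend:
  assumes p: "sublinear p" and G: "dominated_functional_graph p G"
  shows "\<exists>G'. dominated_functional_graph p G' \<and> G \<subseteq> G' \<and> y \<in> fst ` G'"
proof (cases "y \<in> fst ` G")
  case True
  then show ?thesis using G by blast
next
  case False
  obtain t where bound: "\<And>x a s. (x, a) \<in> G \<Longrightarrow> a + s * t \<le> p (x + s *\<^sub>R y)"
    using dominated_functional_graph_extension_value[OF p G, where y = y] by blast
  have sub: "subspace G" and dom: "subspace (fst ` G)"
    using G linear_subspace_image[OF linear_fst] by (auto simp: dominated_functional_graph_def)
  note G = dominated_functional_graphD[OF G]
  define G' where "G' = (\<lambda>((x, a), s). (x + s *\<^sub>R y, a + s * t)) ` (G \<times> (UNIV :: real set))"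
  have G'_mem: "(u, b) \<in> G' \<longleftrightarrow> (\<exists>x a s. (x, a) \<in> G \<and> u = x + s *\<^sub>R y \<and> b = a + s * t)" for u b
    unfolding G'_def by force
  have "subspace G'"
    unfolding G'_def using sub
    by (intro linear_subspace_image subspace_Times subspace_UNIV)
      (auto intro!: linearI simp: algebra_simps)
  moreover have "b = d" if ub: "(u, b) \<in> G'" and ud: "(u, d) \<in> G'" for u b d
  proof -
    obtain x a s x' a' s' where "(x, a) \<in> G" "(x', a') \<in> G"
      and "u = x + s *\<^sub>R y" "u = x' + s' *\<^sub>R y" "b = a + s * t" "d = a' + s' * t"
      using ub ud unfolding G'_mem by blast
    moreover from this have "s = s'"
      by (intro subspace_add_scaleR_coeff_unique[OF dom _ _ False, of x x']) force+
    ultimately show "b = d" using G(4) by auto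
  qed
  moreover have "b \<le> p u" if "(u, b) \<in> G'" for u b
    using that bound unfolding G'_mem by blast
  ultimately have "dominated_functional_graph p G'"
    unfolding dominated_functional_graph_def by blast
  moreover have "G \<subseteq> G'" using G'_mem by (force intro: exI[of _ 0])
  moreover have "(y, t) \<in> G'" using G'_mem G(1) by (force intro: exI[of _ 1])
  ultimately show ?thesis by force
qed

lemma dominated_functional_graph_Union_chain:
  assumes ch: "subset.chain {G. dominated_functional_graph p G} \<C>" and ne: "\<C> \<noteq> {}"
  shows "dominated_functional_graph p (\<Union>\<C>)"
proof -
  have D: "dominated_functional_graph p G" if "G \<in> \<C>" for G
    using ch that by (auto simp: subset.chain_def)
  have common: "\<exists>G\<in>\<C>. u \<in> G \<and> v \<in> G" if "u \<in> \<Union>\<C>" "v \<in> \<Union>\<C>" for u v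
    using that ch unfolding subset.chain_def by blast
  show ?thesis
  proof (rule dominated_functional_graphI)
    show "(0, 0) \<in> \<Union>\<C>" using ne dominated_functional_graphD(1)[OF D] by blast
  next
    fix x a y b assume "(x, a) \<in> \<Union>\<C>" "(y, b) \<in> \<Union>\<C>"
    then show "(x + y, a + b) \<in> \<Union>\<C>"
      using common dominated_functional_graphD(2)[OF D] by blast
  next
    fix x a c assume "(x, a) \<in> \<Union>\<C>"
    then show "(c *\<^sub>R x, c * a) \<in> \<Union>\<C>" using dominated_functional_graphD(3)[OF D] by blast
  next
    fix x a b assume "(x, a) \<in> \<Union>\<C>" "(x, b) \<in> \<Union>\<C>"
    then show "a = b" using common dominated_functional_graphD(4)[OF D] by blast
  next
    fix x a assume "(x, a) \<in> \<Union>\<C>"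
    then show "a \<le> p x" using dominated_functional_graphD(5)[OF D] by blast
  qed
qed

lemma dominated_functional_graph_total_extension:
  assumes p: "sublinear p" and G: "dominated_functional_graph p G"
  obtains M where "dominated_functional_graph p M" "G \<subseteq> M" "\<And>x. \<exists>a. (x, a) \<in> M"
proof -
  define \<A> where "\<A> = {H. dominated_functional_graph p H \<and> G \<subseteq> H}"
  have "\<exists>M\<in>\<A>. \<forall>H\<in>\<A>. M \<subseteq> H \<longrightarrow> H = M"
  proof (rule subset_Zorn_nonempty)
    show "\<A> \<noteq> {}" unfolding \<A>_def using G by blast
  next
    fix \<C> assume ne: "\<C> \<noteq> {}" and ch: "subset.chain \<A> \<C>"
    then have "subset.chain {H. dominated_functional_graph p H} \<C>"
      unfolding subset.chain_def \<A>_def by blast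
    moreover have "G \<subseteq> \<Union>\<C>"
      using ne ch unfolding subset.chain_def \<A>_def by blast
    ultimately show "\<Union>\<C> \<in> \<A>"
      unfolding \<A>_def using dominated_functional_graph_Union_chain[OF _ ne] by blast
  qed
  then obtain M where "M \<in> \<A>" and max: "\<And>H. H \<in> \<A> \<Longrightarrow> M \<subseteq> H \<Longrightarrow> H = M"
    by blast
  then have M: "dominated_functional_graph p M" "G \<subseteq> M" unfolding \<A>_def by auto
  moreover have "\<exists>a. (x, a) \<in> M" for x
  proof -
    obtain H where "dominated_functional_graph p H" "M \<subseteq> H" "x \<in> fst ` H"
      using dominated_functional_graph_extend[OF p M(1)] by blast
    moreover from this have "H \<in> \<A>" using M(2) unfolding \<A>_def by blast
    ultimately show ?thesis using max by force
  qed
  ultimately show ?thesis by (rule that)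
qed

theorem hahn_banach_dominated_extension:
  assumes p: "sublinear p" and G: "dominated_functional_graph p G"
  shows "\<exists>L. linear L \<and> (\<forall>x. L x \<le> p x) \<and> (\<forall>(x, a) \<in> G. L x = a)"
proof -
  obtain M where M: "dominated_functional_graph p M" "G \<subseteq> M" and total: "\<And>x. \<exists>a. (x, a) \<in> M"
    using dominated_functional_graph_total_extension[OF p G] by blast
  note M' = dominated_functional_graphD[OF M(1)]
  define L where "L x = (THE a. (x, a) \<in> M)" for x
  have L_eq: "L x = a" if "(x, a) \<in> M" for x a
    unfolding L_def using that M'(4) by (intro the_equality) blast+
  have L_mem: "(x, L x) \<in> M" for x
  proof -
    obtain a where "(x, a) \<in> M" using total by blast
    with L_eq[OF this] show ?thesis by simp
  qed
  have "linear L"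
  proof (rule linearI)
    show "L (x + y) = L x + L y" for x y by (rule L_eq, rule M'(2)) (rule L_mem)+
    show "L (c *\<^sub>R x) = c *\<^sub>R L x" for c x using L_eq[OF M'(3)[OF L_mem]] by simp
  qed
  moreover have "L x \<le> p x" for x using M'(5)[OF L_mem] .
  moreover have "L x = a" if "(x, a) \<in> G" for x a using L_eq M(2) that by blast
  ultimately show ?thesis by blast
qed

section \<open>Separation by the Minkowski functional\<close>

definition minkowski_functional :: "'a::real_vector set \<Rightarrow> 'a \<Rightarrow> real" where
  "minkowski_functional W x = Inf {l. 0 < l \<and> inverse l *\<^sub>R x \<in> W}"

lemma minkowski_functional_le:
  assumes "0 < l" "inverse l *\<^sub>R x \<in> W"
  shows "minkowski_functional W x \<le> l"
  unfolding minkowski_functional_def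
  by (rule cInf_lower) (use assms in \<open>auto intro: bdd_belowI[of _ 0]\<close>)

context
  fixes W :: "'a::real_normed_vector set"
  assumes W: "convex W" "open W" "0 \<in> W"
begin

lemma open_zero_absorbing:
  obtains r where "0 < r" "\<And>x l. norm x / r < l \<Longrightarrow> inverse l *\<^sub>R x \<in> W"
proof -
  obtain r where r: "0 < r" "ball 0 r \<subseteq> W" using W(2,3) open_contains_ball by blast
  have "inverse l *\<^sub>R x \<in> W" if "norm x / r < l" for x l
  proof -
    have "0 < l" using that r(1) by (smt (verit) divide_nonneg_pos norm_ge_zero)
    then have "norm (inverse l *\<^sub>R x) < r"
      using that r(1) by (simp add: field_simps)
    then show ?thesis using r(2) by auto
  qed
  then show ?thesis using that r(1) by blast
qed

lemma minkowski_functional_greatest: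
  assumes "\<And>l. 0 < l \<Longrightarrow> inverse l *\<^sub>R x \<in> W \<Longrightarrow> c \<le> l"
  shows "c \<le> minkowski_functional W x"
proof -
  obtain r where r: "0 < r" "\<And>x l. norm x / r < l \<Longrightarrow> inverse l *\<^sub>R x \<in> W"
    using open_zero_absorbing by blast
  have "norm x / r + 1 > 0" using r(1) by (smt (verit) divide_nonneg_pos norm_ge_zero)
  then show ?thesis
    unfolding minkowski_functional_def using r(2)[of x "norm x / r + 1"] assms
    by (intro cInf_greatest) auto
qed

lemma minkowski_functional_nonneg: "0 \<le> minkowski_functional W x"
  by (rule minkowski_functional_greatest) simp

lemma minkowski_functional_le_norm:
  obtains r where "0 < r" "\<And>x. minkowski_functional W x \<le> norm x / r"
proof -
  obtain r where r: "0 < r" "\<And>x l. norm x / r < l \<Longrightarrow> inverse l *\<^sub>R x \<in> W"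
    using open_zero_absorbing by blast
  have "minkowski_functional W x \<le> norm x / r" for x
  proof (rule dense_ge)
    fix l assume "norm x / r < l"
    moreover from this have "0 < l" using r(1) by (smt (verit) divide_nonneg_pos norm_ge_zero)
    ultimately show "minkowski_functional W x \<le> l" using r(2) by (intro minkowski_functional_le)
  qed
  then show ?thesis using that r(1) by blast
qed

lemma minkowski_scaled_mem_mono:
  assumes "0 < l" "inverse l *\<^sub>R x \<in> W" "l \<le> m"
  shows "inverse m *\<^sub>R x \<in> W"
proof -
  have "0 < m" using assms by simp
  have "(l / m) *\<^sub>R (inverse l *\<^sub>R x) + (1 - l / m) *\<^sub>R 0 \<in> W"
    using assms \<open>0 < m\<close> by (intro convexD[OF W(1) assms(2) W(3)]) auto
  then show ?thesis using \<open>0 < l\<close> by (simp add: inverse_eq_divide)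
qed

lemma minkowski_functional_ge_one:
  assumes "x \<notin> W"
  shows "1 \<le> minkowski_functional W x"
proof (rule minkowski_functional_greatest, rule ccontr)
  fix l assume "0 < l" "inverse l *\<^sub>R x \<in> W" "\<not> 1 \<le> l"
  then have "inverse 1 *\<^sub>R x \<in> W" using minkowski_scaled_mem_mono[of l x 1] by simp
  then show False using assms by simp
qed

lemma minkowski_functional_less_one:
  assumes "w \<in> W"
  shows "minkowski_functional W w < 1"
proof -
  have "open ((\<lambda>k. k *\<^sub>R w) -` W)"
    by (intro open_vimage W(2) continuous_intros)
  moreover have "1 \<in> (\<lambda>k. k *\<^sub>R w) -` W" using assms by simp
  ultimately obtain e where e: "0 < e" "ball 1 e \<subseteq> (\<lambda>k. k *\<^sub>R w) -` W"
    using open_contains_ball by blast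
  define k where "k = 1 + e / 2"
  have "k \<in> ball 1 e" using e k_def by (simp add: dist_real_def)
  then have "k *\<^sub>R w \<in> W" using e(2) by blast
  then have "minkowski_functional W w \<le> inverse k"
    using e k_def by (intro minkowski_functional_le) auto
  also have "\<dots> < 1" using e k_def by (simp add: inverse_less_1_iff)
  finally show ?thesis .
qed

lemma minkowski_functional_subadditive:
  "minkowski_functional W (x + y) \<le> minkowski_functional W x + minkowski_functional W y"
proof -
  have sum: "minkowski_functional W (x + y) \<le> l + m"
    if l: "0 < l" "inverse l *\<^sub>R x \<in> W" and m: "0 < m" "inverse m *\<^sub>R y \<in> W" for l m
  proof (rule minkowski_functional_le)
    have "(l / (l + m)) *\<^sub>R (inverse l *\<^sub>R x) + (m / (l + m)) *\<^sub>R (inverse m *\<^sub>R y) \<in> W"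
      using l m by (intro convexD[OF W(1)]) (auto simp: add_divide_distrib[symmetric])
    moreover have "(l / (l + m)) *\<^sub>R (inverse l *\<^sub>R x) + (m / (l + m)) *\<^sub>R (inverse m *\<^sub>R y)
        = inverse (l + m) *\<^sub>R (x + y)"
      using l m by (simp add: field_simps scaleR_add_right)
    ultimately show "inverse (l + m) *\<^sub>R (x + y) \<in> W" by simp
  qed (use l m in simp)
  have "minkowski_functional W (x + y) - minkowski_functional W y \<le> l"
    if "0 < l" "inverse l *\<^sub>R x \<in> W" for l
  proof -
    have "minkowski_functional W (x + y) - l \<le> minkowski_functional W y"
      using sum[OF that] by (intro minkowski_functional_greatest) (simp add: algebra_simps)
    then show ?thesis by simp
  qed
  then have "minkowski_functional W (x + y) - minkowski_functional W y \<le> minkowski_functional W x"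
    by (rule minkowski_functional_greatest)
  then show ?thesis by simp
qed

lemma minkowski_functional_scaleR_le:
  assumes "0 < c"
  shows "minkowski_functional W (c *\<^sub>R x) \<le> c * minkowski_functional W x"
proof -
  have "minkowski_functional W (c *\<^sub>R x) / c \<le> l" if "0 < l" "inverse l *\<^sub>R x \<in> W" for l
  proof -
    have "inverse (c * l) *\<^sub>R (c *\<^sub>R x) = inverse l *\<^sub>R x" using assms by simp
    then have "minkowski_functional W (c *\<^sub>R x) \<le> c * l"
      using that assms by (intro minkowski_functional_le) (simp_all only: mult_pos_pos)
    then show ?thesis using assms by (simp add: divide_le_eq mult.commute)
  qed
  then have "minkowski_functional W (c *\<^sub>R x) / c \<le> minkowski_functional W x"
    by (rule minkowski_functional_greatest)
  then show ?thesis using assms by (simp add: divide_le_eq mult.commute)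
qed

lemma sublinear_minkowski_functional: "sublinear (minkowski_functional W)"
proof -
  have "minkowski_functional W (c *\<^sub>R x) = c * minkowski_functional W x" if "0 < c" for c x
  proof (rule antisym)
    have "minkowski_functional W x \<le> inverse c * minkowski_functional W (c *\<^sub>R x)"
      using minkowski_functional_scaleR_le[of "inverse c" "c *\<^sub>R x"] that by simp
    then show "c * minkowski_functional W x \<le> minkowski_functional W (c *\<^sub>R x)"
      using that by (simp add: field_simps)
  qed (rule minkowski_functional_scaleR_le[OF that])
  then show ?thesis
    unfolding sublinear_def using minkowski_functional_subadditive by blast
qed

end

lemma dominated_functional_graph_line:
  assumes p: "sublinear p" "\<And>x. 0 \<le> p x" "1 \<le> p u" and "u \<noteq> 0"
  shows "dominated_functional_graph p {(s *\<^sub>R u, s) | s. True}"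
proof (rule dominated_functional_graphI)
  fix x a assume "(x, a) \<in> {(s *\<^sub>R u, s) | s. True}"
  then have x: "x = a *\<^sub>R u" by simp
  show "a \<le> p x"
  proof (cases "0 < a")
    case True
    then have "p x = a * p u" using p(1) x by (simp add: sublinear_def)
    then show ?thesis using True p(3) by (simp add: mult_le_cancel_left1)
  next
    case False
    then show ?thesis using p(2)[of x] by simp
  qed
qed (use \<open>u \<noteq> 0\<close> in \<open>auto simp: scaleR_add_left intro: exI[of _ 0]\<close>)

lemma linear_bounded_above_by_norm_imp_bounded_linear:
  assumes "linear L" "\<And>x. L x \<le> norm x * K"
  shows "bounded_linear L"
proof -
  have "norm (L x) \<le> norm x * K" for x
    using assms(2)[of x] assms(2)[of "- x"] linear_neg[OF assms(1), of x] by simp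
  then show ?thesis
    unfolding bounded_linear_def bounded_linear_axioms_def using assms(1) by blast
qed

lemma open_convex_positive_functional:
  fixes U :: "'a::real_normed_vector set"
  assumes U: "open U" "convex U" "0 \<notin> U"
  shows "\<exists>c::'a \<Rightarrow>\<^sub>L real. \<forall>u\<in>U. 0 < c u"
proof (cases "U = {}")
  case True
  then show ?thesis by blast
next
  case False
  then obtain u0 where u0: "u0 \<in> U" by blast
  define W where "W = (\<lambda>u. u0 - u) ` U"
  have W: "convex W" "open W" "0 \<in> W"
    using convex_affinity[OF U(2), of u0 "-1"] open_neg_translation[OF U(1)] u0
    by (auto simp: W_def)
  have u0_W: "u0 \<notin> W" and "u0 \<noteq> 0" using U(3) u0 by (force simp: W_def)+
  define p where "p = minkowski_functional W"
  have p: "sublinear p" "0 \<le> p x" "1 \<le> p u0" "w \<in> W \<Longrightarrow> p w < 1" for x w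
    unfolding p_def
    by (fact sublinear_minkowski_functional[OF W] minkowski_functional_nonneg[OF W]
        minkowski_functional_ge_one[OF W u0_W] minkowski_functional_less_one[OF W])+
  obtain L where L: "linear L" "\<And>x. L x \<le> p x" "\<forall>(x, a) \<in> {(s *\<^sub>R u0, s) | s. True}. L x = a"
    using hahn_banach_dominated_extension[OF p(1) dominated_functional_graph_line[OF p(1-3)]]
      \<open>u0 \<noteq> 0\<close> by blast
  then have L_u0: "L u0 = 1" by (metis (mono_tags, lifting) case_prodD mem_Collect_eq scaleR_one)
  obtain r where r: "0 < r" "\<And>x. p x \<le> norm x / r"
    using minkowski_functional_le_norm[OF W] unfolding p_def by blast
  have "bounded_linear L"
    using L(1) order_trans[OF L(2) r(2)]
    by (intro linear_bounded_above_by_norm_imp_bounded_linear[where K = "1 / r"]) auto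
  moreover have "0 < L u" if "u \<in> U" for u
  proof -
    have "L (u0 - u) < 1"
      using order_le_less_trans[OF L(2) p(4)] that unfolding W_def by blast
    then show ?thesis using linear_diff[OF L(1)] L_u0 by simp
  qed
  ultimately show ?thesis
    by (intro exI[of _ "Blinfun L"]) (simp add: bounded_linear_Blinfun_apply)
qed

section \<open>Scalarization of weak minimizers\<close>

lemma interior_cone_add:
  fixes C :: "'a::real_normed_vector set"
  assumes C: "convex C" "cone C" and "a \<in> C" "d \<in> interior C"
  shows "a + d \<in> interior C"
proof -
  have "(+) a ` interior C \<subseteq> C"
    using C \<open>a \<in> C\<close> interior_subset[of C] convex_cone[of C] by blast
  then have "(+) a ` interior C \<subseteq> interior C"
    by (intro interior_maximal open_translation open_interior)
  then show ?thesis using \<open>d \<in> interior C\<close> by blast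
qed

lemma interior_cone_scaleR:
  fixes C :: "'a::real_normed_vector set"
  assumes "cone C" "d \<in> interior C" "0 < s"
  shows "s *\<^sub>R d \<in> interior C"
proof -
  have "(\<lambda>x. s *\<^sub>R x) ` interior C \<subseteq> C"
    using assms interior_subset[of C] by (auto intro!: mem_cone)
  then have "(\<lambda>x. s *\<^sub>R x) ` interior C \<subseteq> interior C"
    using \<open>0 < s\<close> by (intro interior_maximal open_scaling open_interior) auto
  then show ?thesis using \<open>d \<in> interior C\<close> by blast
qed

lemma nonneg_if_pos_add_multiples:
  fixes a b :: real
  assumes "\<And>t. 0 < t \<Longrightarrow> 0 < a + t * b"
  shows "0 \<le> a"
proof (rule ccontr)
  assume "\<not> 0 \<le> a"
  define t where "t = - a / (\<bar>b\<bar> + 1)"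
  have "0 < t" unfolding t_def using \<open>\<not> 0 \<le> a\<close> by (intro divide_pos_pos) auto
  moreover have "t * b \<le> t * \<bar>b\<bar>" using \<open>0 < t\<close> by (simp add: mult_left_mono)
  moreover have "t * \<bar>b\<bar> < - a"
    using \<open>\<not> 0 \<le> a\<close> by (simp add: t_def field_simps)
  ultimately show False using assms[of t] by linarith
qed

lemma convex_C_convex_image_plus_interior:
  fixes F :: "'a::real_vector \<Rightarrow> 'b::real_normed_vector"
  assumes C: "convex C" "cone C" and Q: "convex Q" and F: "C_convex C F"
  shows "convex (\<Union>y\<in>Q. (+) (F y) ` interior C)"
proof (rule convexI)
  fix a b and s t :: real
  assume "a \<in> (\<Union>y\<in>Q. (+) (F y) ` interior C)" "b \<in> (\<Union>y\<in>Q. (+) (F y) ` interior C)"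
    and "0 \<le> s" "0 \<le> t" "s + t = 1"
  then obtain y1 d1 y2 d2 where y: "y1 \<in> Q" "y2 \<in> Q" and d: "d1 \<in> interior C" "d2 \<in> interior C"
    and ab: "a = F y1 + d1" "b = F y2 + d2" and t: "t = 1 - s" "0 \<le> s" "s \<le> 1"
    by auto
  define y where "y = s *\<^sub>R y1 + (1 - s) *\<^sub>R y2"
  have "y \<in> Q" unfolding y_def using y t by (intro convexD[OF Q]) auto
  moreover have "(s *\<^sub>R F y1 + (1 - s) *\<^sub>R F y2 - F y) + (s *\<^sub>R d1 + (1 - s) *\<^sub>R d2) \<in> interior C"
    using F t d unfolding C_convex_def y_def
    by (intro interior_cone_add C convexD[OF convex_interior[OF C(1)]]) auto
  moreover have "s *\<^sub>R a + t *\<^sub>R b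
      = F y + ((s *\<^sub>R F y1 + (1 - s) *\<^sub>R F y2 - F y) + (s *\<^sub>R d1 + (1 - s) *\<^sub>R d2))"
    by (simp add: ab t algebra_simps)
  ultimately show "s *\<^sub>R a + t *\<^sub>R b \<in> (\<Union>y\<in>Q. (+) (F y) ` interior C)" by blast
qed

lemma weak_argmin_scalarization:
  fixes F :: "'a::real_vector \<Rightarrow> 'b::real_normed_vector"
  assumes C: "convex C" "cone C" and e: "e \<in> interior C" and Q: "convex Q"
    and F: "C_convex C F" and z: "z \<in> weak_argmin C F Q"
  shows "\<exists>c \<in> dual_cone C. 0 < c e \<and> (\<forall>y \<in> Q. c (F z) \<le> c (F y))"
proof -
  have zQ: "z \<in> Q" and zmin: "\<And>y. y \<in> Q \<Longrightarrow> F z - F y \<notin> interior C"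
    using z by (auto simp: weak_argmin_def)
  define U where "U = (\<lambda>u. u - F z) ` (\<Union>y\<in>Q. (+) (F y) ` interior C)"
  have U_mem: "F y - F z + d \<in> U" if "y \<in> Q" "d \<in> interior C" for y d
    using that unfolding U_def by (force simp: algebra_simps)
  have "open U"
    unfolding U_def by (intro open_translation_subtract open_UN ballI open_translation open_interior)
  moreover have "convex U"
    unfolding U_def by (intro convex_translation_subtract convex_C_convex_image_plus_interior C Q F)
  moreover have "0 \<notin> U"
  proof
    assume "0 \<in> U"
    then obtain y d where "y \<in> Q" "d \<in> interior C" "F y + d - F z = 0" unfolding U_def by auto
    moreover from this have "F z - F y = d" by (simp add: algebra_simps)
    ultimately show False using zmin by blast
  qed
  ultimately obtain c :: "'b \<Rightarrow>\<^sub>L real" where c: "\<And>u. u \<in> U \<Longrightarrow> 0 < c u"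
    using open_convex_positive_functional by blast
  have c_shift: "0 < c (F y) - c (F z) + c d" if "y \<in> Q" "d \<in> interior C" for y d
    using c[OF U_mem[OF that]] by (simp add: blinfun.bilinear_simps)
  have ce: "0 < c e" using c_shift[OF zQ e] by simp
  have "c \<in> dual_cone C"
    unfolding dual_cone_def
  proof (intro CollectI ballI nonneg_if_pos_add_multiples)
    fix k and s :: real assume "k \<in> C" "0 < s"
    then have "k + s *\<^sub>R e \<in> interior C"
      using C e by (intro interior_cone_add interior_cone_scaleR)
    from c_shift[OF zQ this] show "0 < c k + s * c e" by (simp add: blinfun.bilinear_simps)
  qed
  moreover have "c (F z) \<le> c (F y)" if "y \<in> Q" for y
  proof -
    have "0 \<le> c (F y) - c (F z)"
    proof (rule nonneg_if_pos_add_multiples)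
      fix s :: real assume "0 < s"
      then show "0 < c (F y) - c (F z) + s * c e"
        using c_shift[OF that interior_cone_scaleR[OF C(2) e]] by (simp add: blinfun.bilinear_simps)
    qed
    then show ?thesis by simp
  qed
  ultimately show ?thesis using ce by blast
qed

section \<open>Convexity and first-order optimality\<close>

lemma C_convex_add:
  assumes "convex C" "cone C" "C_convex C F" "C_convex C G"
  shows "C_convex C (\<lambda>y. F y + G y)"
  unfolding C_convex_def
proof (intro allI impI)
  fix x y and t :: real assume "0 \<le> t \<and> t \<le> 1"
  then have "(t *\<^sub>R F x + (1 - t) *\<^sub>R F y - F (t *\<^sub>R x + (1 - t) *\<^sub>R y))
      + (t *\<^sub>R G x + (1 - t) *\<^sub>R G y - G (t *\<^sub>R x + (1 - t) *\<^sub>R y)) \<in> C"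
    using assms convex_cone[of C] unfolding C_convex_def by blast
  then show "t *\<^sub>R (F x + G x) + (1 - t) *\<^sub>R (F y + G y)
      - (F (t *\<^sub>R x + (1 - t) *\<^sub>R y) + G (t *\<^sub>R x + (1 - t) *\<^sub>R y)) \<in> C"
    by (simp add: algebra_simps)
qed

lemma C_convex_scaleR:
  assumes "cone C" "0 \<le> a" "C_convex C F"
  shows "C_convex C (\<lambda>y. a *\<^sub>R F y)"
  using assms mem_cone[OF assms(1)] unfolding C_convex_def
  by (metis (no_types, lifting) scaleR_diff_right scaleR_left_commute scaleR_right_distrib)

lemma C_convex_convex_on_scaleR:
  assumes "cone C" "e \<in> C" "convex_on UNIV h"
  shows "C_convex C (\<lambda>y. h y *\<^sub>R e)"
  unfolding C_convex_def
proof (intro allI impI)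
  fix x y and t :: real assume "0 \<le> t \<and> t \<le> 1"
  then have "0 \<le> t * h x + (1 - t) * h y - h (t *\<^sub>R x + (1 - t) *\<^sub>R y)"
    using convex_onD[OF assms(3), of "1 - t" x y] by simp
  then have "(t * h x + (1 - t) * h y - h (t *\<^sub>R x + (1 - t) *\<^sub>R y)) *\<^sub>R e \<in> C"
    by (rule mem_cone[OF assms(1,2)])
  then show "t *\<^sub>R h x *\<^sub>R e + (1 - t) *\<^sub>R h y *\<^sub>R e - h (t *\<^sub>R x + (1 - t) *\<^sub>R y) *\<^sub>R e \<in> C"
    by (simp add: algebra_simps)
qed

lemma convex_on_dual_cone_comp:
  assumes "c \<in> dual_cone C" "C_convex C F"
  shows "convex_on UNIV (\<lambda>y. c (F y))"
proof (rule convex_onI)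
  fix t :: real and x y assume "0 < t" "t < 1"
  then have "(1 - t) *\<^sub>R F x + (1 - (1 - t)) *\<^sub>R F y - F ((1 - t) *\<^sub>R x + (1 - (1 - t)) *\<^sub>R y) \<in> C"
    using assms(2)[unfolded C_convex_def, rule_format, of "1 - t" x y] \<open>0 < t\<close> \<open>t < 1\<close> by simp
  then have "0 \<le> c ((1 - t) *\<^sub>R F x + t *\<^sub>R F y - F ((1 - t) *\<^sub>R x + t *\<^sub>R y))"
    using assms(1) unfolding dual_cone_def by simp
  then show "c (F ((1 - t) *\<^sub>R x + t *\<^sub>R y)) \<le> (1 - t) * c (F x) + t * c (F y)"
    by (simp add: blinfun.bilinear_simps)
qed simp

lemma concave_on_linear:
  assumes "linear h" "convex S"
  shows "concave_on S h"
  using assms by (simp add: concave_on_iff linear_add linear_scale)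

lemma strictly_convex_imp_convex_on:
  assumes "strictly_convex g"
  shows "convex_on UNIV g"
proof (rule convex_onI)
  fix t :: real and x y assume "0 < t" "t < 1"
  then show "g ((1 - t) *\<^sub>R x + t *\<^sub>R y) \<le> (1 - t) * g x + t * g y"
    using assms[unfolded strictly_convex_def, rule_format, of x y "1 - t"]
    by (cases "x = y") (auto simp flip: scaleR_add_left distrib_right)
qed simp

lemma first_order_min_convex_plus_differentiable:
  fixes u h :: "'a::real_vector \<Rightarrow> real"
  assumes Q: "convex Q" "y \<in> Q" "z \<in> Q" and u: "convex_on Q u"
    and h: "((\<lambda>t. h (z + t *\<^sub>R (y - z))) has_real_derivative D) (at_right 0)"
    and min: "\<And>w. w \<in> Q \<Longrightarrow> u z + h z \<le> u w + h w"
  shows "0 \<le> u y - u z + D"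
proof -
  define q where "q t = u y - u z + (h (z + t *\<^sub>R (y - z)) - h z) / t" for t
  have "0 \<le> q t" if t: "0 < t" "t < 1" for t
  proof -
    have w: "z + t *\<^sub>R (y - z) = (1 - t) *\<^sub>R z + t *\<^sub>R y" by (simp add: algebra_simps)
    have "u z + h z \<le> u (z + t *\<^sub>R (y - z)) + h (z + t *\<^sub>R (y - z))"
      using Q t by (intro min) (simp add: w convexD_alt)
    also have "u (z + t *\<^sub>R (y - z)) \<le> (1 - t) * u z + t * u y"
      unfolding w using Q t by (intro convex_onD[OF u]) auto
    finally have "0 \<le> t * (u y - u z) + (h (z + t *\<^sub>R (y - z)) - h z)"
      by (simp add: algebra_simps)
    then show ?thesis using t by (simp add: q_def field_simps)
  qed
  then have "\<forall>\<^sub>F t in at_right 0. 0 \<le> q t"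
    unfolding eventually_at_right_field by (intro exI[of _ 1]) auto
  moreover have "(q \<longlongrightarrow> u y - u z + D) (at_right 0)"
    using h unfolding q_def has_field_derivative_iff by (auto intro: tendsto_intros)
  ultimately show ?thesis by (intro tendsto_lowerbound) auto
qed

lemma C_convex_bregman_objective:
  fixes \<phi> :: "'a::real_normed_vector \<Rightarrow>\<^sub>L real"
  assumes C: "convex C" "cone C" and e: "e \<in> C" and \<beta>: "0 \<le> \<beta>"
    and G: "C_convex C G" and g: "convex_on UNIV g"
  shows "C_convex C (\<lambda>y. \<beta> *\<^sub>R G y + (g y - \<phi> y) *\<^sub>R e)"
proof -
  have "convex_on UNIV (\<lambda>y. g y - \<phi> y)"
    using g by (intro convex_on_diff concave_on_linear)
      (auto simp: bounded_linear.linear[OF blinfun.bounded_linear_right])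
  then show ?thesis
    using C e \<beta> G by (intro C_convex_add C_convex_scaleR C_convex_convex_on_scaleR)
qed

lemma bregman_objective_first_order:
  fixes \<phi> :: "'a::real_normed_vector \<Rightarrow>\<^sub>L real" and G :: "'a \<Rightarrow> 'b::real_normed_vector"
  assumes Q: "convex Q" "y \<in> Q" "z \<in> Q"
    and c: "c \<in> dual_cone C" and G: "C_convex C G" and \<beta>: "0 \<le> \<beta>" and g: "gateaux_deriv g gd"
    and min: "\<And>w. w \<in> Q \<Longrightarrow>
      c (\<beta> *\<^sub>R G z + (g z - \<phi> z) *\<^sub>R e) \<le> c (\<beta> *\<^sub>R G w + (g w - \<phi> w) *\<^sub>R e)"
  shows "(\<phi> - gd z) (y - z) * c e \<le> \<beta> * (c (G y) - c (G z))"
proof -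
  have "convex_on UNIV (\<lambda>w. c (G w))" by (rule convex_on_dual_cone_comp[OF c G])
  then have u: "convex_on Q (\<lambda>w. \<beta> * c (G w))"
    using \<beta> Q(1) by (intro convex_on_cmul) (auto intro: convex_on_subset)
  have "((\<lambda>t. g (z + t *\<^sub>R (y - z))) has_real_derivative gd z (y - z)) (at_right 0)"
    using g unfolding gateaux_deriv_def by (blast intro: has_field_derivative_at_within)
  then have "((\<lambda>t. c e * (g (z + t *\<^sub>R (y - z)) - \<phi> (z + t *\<^sub>R (y - z))))
      has_real_derivative c e * (gd z (y - z) - \<phi> (y - z))) (at_right 0)"
    by (auto intro!: derivative_eq_intros simp: blinfun.bilinear_simps)
  moreover have "\<beta> * c (G z) + c e * (g z - \<phi> z) \<le> \<beta> * c (G w) + c e * (g w - \<phi> w)"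
    if "w \<in> Q" for w
    using min[OF that] by (simp add: blinfun.bilinear_simps algebra_simps)
  ultimately have "0 \<le> \<beta> * c (G y) - \<beta> * c (G z) + c e * (gd z (y - z) - \<phi> (y - z))"
    by (rule first_order_min_convex_plus_differentiable[OF Q u])
  then show ?thesis by (simp add: blinfun.diff_left algebra_simps)
qed

theorem proposition3p3:
  fixes K :: "'a::banach set" and C :: "'b::banach set"
    and g :: "'a \<Rightarrow> real" and gd :: "'a \<Rightarrow> ('a \<Rightarrow>\<^sub>L real)"
    and T :: "'a \<Rightarrow> 'a set" and f :: "'a \<Rightarrow> 'a \<Rightarrow> 'b"
    and v x z :: 'a and \<beta> :: real and e :: 'b
  assumes K: "K \<noteq> {}" "closed K" "convex K"
    and C: "closed C" "convex C" "cone C" "C \<inter> uminus ` C \<subseteq> {0}" "interior C \<noteq> {}"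
    and gF: "class_F g gd" and "H1 g gd" and "H2 g gd" and "H3 gd" and "H4 g"
    and "B4 g gd K T"
    and "B1 f" and "B2 f" and "B3 C f"
    and v: "v \<in> K" and x: "x \<in> T v" and \<beta>: "\<beta> > 0" and e: "e \<in> interior C"
    and z: "z \<in> weak_argmin C
              (\<lambda>y. \<beta> *\<^sub>R f x y + g y *\<^sub>R e - blinfun_apply (gd x) y *\<^sub>R e) (T v)"
  shows "\<exists>c \<in> dual_cone C - {0}. \<forall>y \<in> T v.
           blinfun_apply (gd x - gd z) (y - z) * blinfun_apply c e
             \<le> \<beta> * (blinfun_apply c (f x y) - blinfun_apply c (f x z))"
proof -
  define F where "F y = \<beta> *\<^sub>R f x y + (g y - gd x y) *\<^sub>R e" for y
  have convex_Tv: "convex (T v)" using \<open>B4 g gd K T\<close> v by (simp add: B4_def)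
  have "C_convex C F"
    unfolding F_def using \<open>B3 C f\<close> C(2,3) e \<beta> interior_subset[of C] gF
    by (intro C_convex_bregman_objective strictly_convex_imp_convex_on)
      (auto simp: B3_def class_F_def)
  moreover have "F = (\<lambda>y. \<beta> *\<^sub>R f x y + g y *\<^sub>R e - gd x y *\<^sub>R e)"
    by (simp add: F_def fun_eq_iff scaleR_diff_left)
  then have "z \<in> weak_argmin C F (T v)" using z by simp
  ultimately obtain c where c: "c \<in> dual_cone C" "0 < c e"
    and min: "\<And>y. y \<in> T v \<Longrightarrow> c (F z) \<le> c (F y)"
    using weak_argmin_scalarization[OF C(2,3) e convex_Tv] by blast
  have "z \<in> T v" using z by (simp add: weak_argmin_def)
  then have "\<forall>y \<in> T v. (gd x - gd z) (y - z) * c e \<le> \<beta> * (c (f x y) - c (f x z))"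
    using convex_Tv c(1) \<open>B3 C f\<close> \<beta> gF min unfolding F_def
    by (intro ballI bregman_objective_first_order) (auto simp: B3_def class_F_def)
  moreover have "c \<noteq> 0" using c(2) by auto
  ultimately show ?thesis using c(1) by blast
qed

end
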